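(* For every $r\ge0$, $\gamma(h_r)=(-1)^{\binom r2}h_r^*$ and $\gamma(e_r)=(-1)^{\binom r2}e_r^*$ in $OSym$. Consequently $*\circ\gamma\circ\psi=\psi\circ*\circ\gamma$.
   Context: $\Bbbk$ is a field of characteristic $\neq2$. $OSym$ is the graded superalgebra generated by $h_r$ ($r\ge1$) of degree $2r$, parity $r\bmod 2$, subject to (with $h_0:=1$, $r\ge0,s\ge1$): $h_rh_s=h_sh_r$ if $r\equiv s\pmod2$; $h_rh_s+(-1)^rh_sh_r=(-1)^rh_{r+1}h_{s-1}+h_{s-1}h_{r+1}$ otherwise. Define $e_r$ by $\sum_{s=0}^r(-1)^se_sh_{r-s}=\delta_{r,0}$; the $e_r$ ($r\ge1$) generate $OSym$ subject to the same relations as the $h_r$. $\psi$ is the algebra automorphism of $OSym$ with $\psi(h_r)=(-1)^re_r$; $\gamma$ is the algebra involution with $\gamma(e_r)=(-1)^{\binom r2}e_r$; $*$ is the superalgebra anti-involution (i.e. $(ab)^*=(-1)^{\mathrm{par}(a)\mathrm{par}(b)}b^*a^*$) with $e_r^*=e_r$. *)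

theory Defs
  imports Main
begin

text \<open>The free associative unital algebra over a field on generators x_r (r \<ge> 1):
  elements are coefficient functions on words (lists of generator indices);
  the algebra proper is the set FA of finitely supported functions whose support
  avoids the letter 0. OSym is FA modulo the two-sided ideal osym_ideal; equality in
  OSym is the relation osym_eq.\<close>

type_synonym 'k fa = "nat list \<Rightarrow> 'k"

definition fa_zero :: "'k::field fa" where
  "fa_zero = (\<lambda>w. 0)"

definition fa_one :: "'k::field fa" where
  "fa_one = (\<lambda>w. if w = [] then 1 else 0)"

definition fa_gen :: "nat \<Rightarrow> 'k::field fa" where
  "fa_gen r = (\<lambda>w. if w = [r] then 1 else 0)"

definition fa_add :: "'k::field fa \<Rightarrow> 'k fa \<Rightarrow> 'k fa" where
  "fa_add p q = (\<lambda>w. p w + q w)"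

definition fa_smult :: "'k::field \<Rightarrow> 'k fa \<Rightarrow> 'k fa" where
  "fa_smult c p = (\<lambda>w. c * p w)"

definition fa_mult :: "'k::field fa \<Rightarrow> 'k fa \<Rightarrow> 'k fa" where
  "fa_mult p q = (\<lambda>w. \<Sum>i\<le>length w. p (take i w) * q (drop i w))"

definition FA :: "'k::field fa set" where
  "FA = {p. finite {w. p w \<noteq> 0} \<and> (\<forall>w. p w \<noteq> 0 \<longrightarrow> 0 \<notin> set w)}"

definition hgen :: "nat \<Rightarrow> 'k::field fa" where
  "hgen r = (if r = 0 then fa_one else fa_gen r)"

text \<open>e_r defined from sum_{s=0}^r (-1)^s e_s h_{r-s} = delta_{r,0}, i.e.
  e_0 = 1 and e_r = sum_{s<r} (-1)^(r-s+1) e_s h_{r-s} for r \<ge> 1.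
  elist n = [e_0, ..., e_n].\<close>
fun elist :: "nat \<Rightarrow> 'k::field fa list" where
  "elist 0 = [fa_one]"
| "elist (Suc n) = elist n @
     [foldr fa_add (map (\<lambda>s. fa_smult ((-1) ^ (Suc n - s + 1))
                              (fa_mult (elist n ! s) (hgen (Suc n - s)))) [0..<Suc n]) fa_zero]"

definition egen :: "nat \<Rightarrow> 'k::field fa" where
  "egen r = elist r ! r"

definition osym_rel :: "nat \<Rightarrow> nat \<Rightarrow> 'k::field fa" where
  "osym_rel r s =
    (if even (r + s) then
       fa_add (fa_mult (hgen r) (hgen s)) (fa_smult (-1) (fa_mult (hgen s) (hgen r)))
     else
       fa_add (fa_add (fa_mult (hgen r) (hgen s)) (fa_smult ((-1) ^ r) (fa_mult (hgen s) (hgen r))))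
         (fa_add (fa_smult (- ((-1) ^ r)) (fa_mult (hgen (r + 1)) (hgen (s - 1))))
                 (fa_smult (-1) (fa_mult (hgen (s - 1)) (hgen (r + 1))))))"

inductive_set osym_ideal :: "'k::field fa set" where
  rel: "1 \<le> s \<Longrightarrow> osym_rel r s \<in> osym_ideal"
| zero: "fa_zero \<in> osym_ideal"
| add: "a \<in> osym_ideal \<Longrightarrow> b \<in> osym_ideal \<Longrightarrow> fa_add a b \<in> osym_ideal"
| smult: "a \<in> osym_ideal \<Longrightarrow> fa_smult c a \<in> osym_ideal"
| lmult: "a \<in> osym_ideal \<Longrightarrow> x \<in> FA \<Longrightarrow> fa_mult x a \<in> osym_ideal"
| rmult: "a \<in> osym_ideal \<Longrightarrow> x \<in> FA \<Longrightarrow> fa_mult a x \<in> osym_ideal"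

definition osym_eq :: "'k::field fa \<Rightarrow> 'k fa \<Rightarrow> bool" where
  "osym_eq a b \<longleftrightarrow> fa_add a (fa_smult (-1) b) \<in> osym_ideal"

definition pure :: "nat \<Rightarrow> 'k::field fa \<Rightarrow> bool" where
  "pure p a \<longleftrightarrow> (\<forall>w. a w \<noteq> 0 \<longrightarrow> sum_list w mod 2 = p)"

text \<open>A map on representatives inducing a well-defined linear map of OSym.\<close>
definition osym_linear :: "('k::field fa \<Rightarrow> 'k fa) \<Rightarrow> bool" where
  "osym_linear \<phi> \<longleftrightarrow>
     (\<forall>a\<in>FA. \<phi> a \<in> FA) \<and>
     (\<forall>a\<in>FA. \<forall>b\<in>FA. osym_eq a b \<longrightarrow> osym_eq (\<phi> a) (\<phi> b)) \<and>
     (\<forall>a\<in>FA. \<forall>b\<in>FA. osym_eq (\<phi> (fa_add a b)) (fa_add (\<phi> a) (\<phi> b))) \<and>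
     (\<forall>c. \<forall>a\<in>FA. osym_eq (\<phi> (fa_smult c a)) (fa_smult c (\<phi> a)))"

definition osym_hom :: "('k::field fa \<Rightarrow> 'k fa) \<Rightarrow> bool" where
  "osym_hom \<phi> \<longleftrightarrow> osym_linear \<phi> \<and>
     (\<forall>a\<in>FA. \<forall>b\<in>FA. osym_eq (\<phi> (fa_mult a b)) (fa_mult (\<phi> a) (\<phi> b))) \<and>
     osym_eq (\<phi> fa_one) fa_one"

definition osym_bij :: "('k::field fa \<Rightarrow> 'k fa) \<Rightarrow> bool" where
  "osym_bij \<phi> \<longleftrightarrow>
     (\<forall>a\<in>FA. \<forall>b\<in>FA. osym_eq (\<phi> a) (\<phi> b) \<longrightarrow> osym_eq a b) \<and>
     (\<forall>b\<in>FA. \<exists>a\<in>FA. osym_eq (\<phi> a) b)"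

definition osym_super_antihom :: "('k::field fa \<Rightarrow> 'k fa) \<Rightarrow> bool" where
  "osym_super_antihom \<phi> \<longleftrightarrow> osym_linear \<phi> \<and>
     (\<forall>p q. \<forall>a\<in>FA. \<forall>b\<in>FA. pure p a \<longrightarrow> pure q b \<longrightarrow>
        osym_eq (\<phi> (fa_mult a b)) (fa_smult ((-1) ^ (p * q)) (fa_mult (\<phi> b) (\<phi> a)))) \<and>
     osym_eq (\<phi> fa_one) fa_one"

definition osym_involutive :: "('k::field fa \<Rightarrow> 'k fa) \<Rightarrow> bool" where
  "osym_involutive \<phi> \<longleftrightarrow> (\<forall>a\<in>FA. osym_eq (\<phi> (\<phi> a)) a)"

end

theory Submission
  imports Defs
begin

text \<open>For e_r the claim is just the two hypotheses on e_r combined. For h_r, apply \<gamma> to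
  \<open>\<Sum>s (-1)^s e_s h_(r-s) = 0\<close> and * to \<open>\<Sum>s (-1)^s h_(r-s) e_s = 0\<close> (r \<ge> 1): both become
  relations expressing \<gamma>(h_r), resp. h_r^*, through e_s \<gamma>(h_(r-s)), resp. e_s h_(r-s)^*, for s \<ge> 1,
  and because \<open>(-1)^(binom (s+t) 2) = (-1)^(binom s 2 + binom t 2 + s t)\<close> the two relations match
  term by term once \<gamma>(h_t) = \<plusminus> h_t^* is known for t < r. For the commutation both sides are linear,
  so it suffices to evaluate them on the monomials h_(r_1)\<cdots>h_(r_k); each side yields the same
  signed monomial e_(r_k)\<cdots>e_(r_1).\<close>

definition fsum :: "'i set \<Rightarrow> ('i \<Rightarrow> 'k::field fa) \<Rightarrow> 'k fa" where
  "fsum A f = (\<lambda>w. \<Sum>i\<in>A. f i w)"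

lemma fa_mult_add_left: "fa_mult (fa_add p q) r = fa_add (fa_mult p r) (fa_mult q r)"
  by (auto simp: fa_mult_def fa_add_def distrib_right sum.distrib)

lemma fa_mult_add_right: "fa_mult r (fa_add p q) = fa_add (fa_mult r p) (fa_mult r q)"
  by (auto simp: fa_mult_def fa_add_def distrib_left sum.distrib)

lemma fa_mult_smult_left: "fa_mult (fa_smult c p) r = fa_smult c (fa_mult p r)"
  by (auto simp: fa_mult_def fa_smult_def sum_distrib_left mult.assoc)

lemma fa_mult_smult_right: "fa_mult r (fa_smult c p) = fa_smult c (fa_mult r p)"
  by (auto simp: fa_mult_def fa_smult_def sum_distrib_left mult.left_commute)

lemma fa_mult_fsum_left: "fa_mult (fsum A f) r = fsum A (\<lambda>i. fa_mult (f i) r)"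
  unfolding fa_mult_def fsum_def by (auto simp: sum_distrib_right intro!: ext sum.swap)

lemma fa_mult_fsum_right: "fa_mult r (fsum A f) = fsum A (\<lambda>i. fa_mult r (f i))"
  unfolding fa_mult_def fsum_def by (auto simp: sum_distrib_left intro!: ext sum.swap)

lemma fa_mult_zero_left [simp]: "fa_mult fa_zero r = fa_zero"
  by (auto simp: fa_mult_def fa_zero_def)

lemma fa_mult_zero_right [simp]: "fa_mult r fa_zero = fa_zero"
  by (auto simp: fa_mult_def fa_zero_def)

lemma fa_mult_one_left [simp]: "fa_mult fa_one p = p"
proof
  fix w :: "nat list"
  have "fa_mult fa_one p w = (\<Sum>i\<le>length w. if i = 0 then p w else 0)"
    unfolding fa_mult_def fa_one_def by (rule sum.cong) auto
  then show "fa_mult fa_one p w = p w" by (simp add: sum.delta)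
qed

lemma fa_mult_one_right [simp]: "fa_mult p fa_one = p"
proof
  fix w :: "nat list"
  have "fa_mult p fa_one w = (\<Sum>i\<le>length w. if i = length w then p w else 0)"
    unfolding fa_mult_def fa_one_def by (rule sum.cong) auto
  then show "fa_mult p fa_one w = p w" by (simp add: sum.delta)
qed

lemma fa_mult_assoc: "fa_mult (fa_mult p q) r = fa_mult p (fa_mult q r)"
proof
  fix w :: "nat list"
  define n where "n = length w"
  define g where "g = (\<lambda>j k. p (take j w) * q (take k (drop j w)) * r (drop (j + k) w))"
  have "fa_mult (fa_mult p q) r w = (\<Sum>i\<le>n. \<Sum>j\<le>i. g j (i - j))"
    unfolding fa_mult_def n_def g_def
    by (auto simp: sum_distrib_right min_def drop_take intro!: sum.cong)
  also have "\<dots> = (\<Sum>(j, k)\<in>{(j, k). j + k \<le> n}. g j k)"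
    by (rule sum.triangle_reindex_eq[symmetric])
  also have "{(j, k). j + k \<le> n} = Sigma {..n} (\<lambda>j. {..n - j})" by auto
  also have "(\<Sum>(j, k)\<in>Sigma {..n} (\<lambda>j. {..n - j}). g j k) = (\<Sum>j\<le>n. \<Sum>k\<le>n - j. g j k)"
    by (rule sum.Sigma[symmetric]) auto
  also have "\<dots> = fa_mult p (fa_mult q r) w"
    unfolding fa_mult_def n_def g_def
    by (auto simp: sum_distrib_left mult.assoc add.commute intro!: sum.cong)
  finally show "fa_mult (fa_mult p q) r w = fa_mult p (fa_mult q r) w" .
qed

lemma fa_smult_smult [simp]: "fa_smult a (fa_smult b x) = fa_smult (a * b) x"
  by (auto simp: fa_smult_def)

lemma fa_smult_one [simp]: "fa_smult 1 x = x"
  by (auto simp: fa_smult_def)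

lemma fa_smult_zero [simp]: "fa_smult c fa_zero = fa_zero"
  by (auto simp: fa_smult_def fa_zero_def)

lemma fsum_cong: "(\<And>i. i \<in> A \<Longrightarrow> f i = g i) \<Longrightarrow> fsum A f = fsum A g"
  unfolding fsum_def by (intro ext sum.cong) auto

lemma fsum_empty [simp]: "fsum {} f = fa_zero"
  by (simp add: fsum_def fa_zero_def)

lemma fsum_insert: "finite A \<Longrightarrow> x \<notin> A \<Longrightarrow> fsum (insert x A) f = fa_add (f x) (fsum A f)"
  by (simp add: fsum_def fa_add_def)

lemma fsum_smult: "fsum A (\<lambda>i. fa_smult c (f i)) = fa_smult c (fsum A f)"
  by (auto simp: fsum_def fa_smult_def sum_distrib_left)

lemma fsum_atMost_split_first: "0 < (n::nat) \<Longrightarrow> fsum {..n} f = fa_add (f 0) (fsum {1..n} f)"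
proof -
  assume "0 < n"
  then have "{..n} = insert 0 {1..n}" by auto
  moreover have "0 \<notin> {1..n}" by simp
  ultimately show ?thesis by (simp add: fsum_insert)
qed

lemma fsum_delta:
  assumes "finite A"
  shows "fsum A (\<lambda>k. if k = a then x else fa_zero) = (if a \<in> A then x else fa_zero)"
proof
  fix w
  have "fsum A (\<lambda>k. if k = a then x else fa_zero) w = (\<Sum>k\<in>A. if k = a then x w else 0)"
    unfolding fsum_def fa_zero_def by (rule sum.cong) auto
  with assms show "fsum A (\<lambda>k. if k = a then x else fa_zero) w = (if a \<in> A then x else fa_zero) w"
    by (simp add: fa_zero_def)
qed

lemma foldr_fa_add_eq_fsum: "distinct xs \<Longrightarrow> foldr fa_add (map f xs) fa_zero = fsum (set xs) f"
  by (induction xs) (auto simp: fsum_insert)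

lemma FA_zero [simp]: "fa_zero \<in> FA"
  by (simp add: FA_def fa_zero_def)

lemma FA_one [simp]: "fa_one \<in> FA"
  by (simp add: FA_def fa_one_def)

lemma FA_gen: "1 \<le> r \<Longrightarrow> fa_gen r \<in> FA"
  by (auto simp: FA_def fa_gen_def)

lemma FA_hgen [simp]: "hgen r \<in> FA"
  by (simp add: hgen_def FA_gen)

lemma FA_add [simp]: "p \<in> FA \<Longrightarrow> q \<in> FA \<Longrightarrow> fa_add p q \<in> FA"
proof -
  assume p: "p \<in> FA" and q: "q \<in> FA"
  have "{w. fa_add p q w \<noteq> 0} \<subseteq> {w. p w \<noteq> 0} \<union> {w. q w \<noteq> 0}"
    by (auto simp: fa_add_def)
  moreover have "finite ({w. p w \<noteq> 0} \<union> {w. q w \<noteq> 0})"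
    using p q by (auto simp: FA_def)
  ultimately show ?thesis
    using p q unfolding FA_def by (auto simp: fa_add_def intro: finite_subset)
qed

lemma FA_smult [simp]: "p \<in> FA \<Longrightarrow> fa_smult c p \<in> FA"
proof -
  assume p: "p \<in> FA"
  have "{w. fa_smult c p w \<noteq> 0} \<subseteq> {w. p w \<noteq> 0}" by (auto simp: fa_smult_def)
  then show ?thesis using p unfolding FA_def by (auto simp: fa_smult_def intro: finite_subset)
qed

lemma fa_mult_nonzero_split:
  assumes "fa_mult p q w \<noteq> 0"
  obtains i where "p (take i w) \<noteq> 0" and "q (drop i w) \<noteq> 0"
proof -
  have "\<exists>i. p (take i w) \<noteq> 0 \<and> q (drop i w) \<noteq> 0"
  proof (rule ccontr)
    assume "\<not> ?thesis"
    then have "fa_mult p q w = 0" unfolding fa_mult_def by (intro sum.neutral) auto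
    with assms show False by simp
  qed
  then show ?thesis using that by blast
qed

lemma FA_mult [simp]: "p \<in> FA \<Longrightarrow> q \<in> FA \<Longrightarrow> fa_mult p q \<in> FA"
proof -
  assume p: "p \<in> FA" and q: "q \<in> FA"
  let ?P = "{w. p w \<noteq> 0}" and ?Q = "{w. q w \<noteq> 0}"
  have "{w. fa_mult p q w \<noteq> 0} \<subseteq> (\<lambda>(u, v). u @ v) ` (?P \<times> ?Q)"
  proof
    fix w assume "w \<in> {w. fa_mult p q w \<noteq> 0}"
    then obtain i where "p (take i w) \<noteq> 0" "q (drop i w) \<noteq> 0"
      using fa_mult_nonzero_split by blast
    then show "w \<in> (\<lambda>(u, v). u @ v) ` (?P \<times> ?Q)"
      by (intro image_eqI[where x="(take i w, drop i w)"]) auto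
  qed
  moreover have "finite ((\<lambda>(u, v). u @ v) ` (?P \<times> ?Q))"
    using p q by (auto simp: FA_def)
  moreover have "0 \<notin> set w" if nz: "fa_mult p q w \<noteq> 0" for w
  proof -
    obtain i where "p (take i w) \<noteq> 0" "q (drop i w) \<noteq> 0"
      using fa_mult_nonzero_split[OF nz] by blast
    then have "0 \<notin> set (take i w)" "0 \<notin> set (drop i w)" using p q by (auto simp: FA_def)
    then show ?thesis by (metis Un_iff append_take_drop_id set_append)
  qed
  ultimately show ?thesis unfolding FA_def by (auto intro: finite_subset)
qed

lemma FA_fsum: "finite A \<Longrightarrow> (\<And>i. i \<in> A \<Longrightarrow> f i \<in> FA) \<Longrightarrow> fsum A f \<in> FA"
  by (induction A rule: finite_induct) (auto simp: fsum_insert)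

lemma osym_eq_refl [simp]: "osym_eq a a"
proof -
  have "fa_add a (fa_smult (-1) a) = fa_zero" by (auto simp: fa_add_def fa_smult_def fa_zero_def)
  then show ?thesis unfolding osym_eq_def using osym_ideal.zero by simp
qed

lemma osym_eq_sym: "osym_eq a b \<Longrightarrow> osym_eq b a"
proof -
  assume "osym_eq a b"
  then have "fa_smult (-1) (fa_add a (fa_smult (-1) b)) \<in> osym_ideal"
    unfolding osym_eq_def by (rule osym_ideal.smult)
  moreover have "fa_smult (-1) (fa_add a (fa_smult (-1) b)) = fa_add b (fa_smult (-1) a)"
    by (auto simp: fa_add_def fa_smult_def)
  ultimately show ?thesis unfolding osym_eq_def by simp
qed

lemma osym_eq_trans [trans]: "osym_eq a b \<Longrightarrow> osym_eq b c \<Longrightarrow> osym_eq a c"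
proof -
  assume "osym_eq a b" "osym_eq b c"
  then have "fa_add (fa_add a (fa_smult (-1) b)) (fa_add b (fa_smult (-1) c)) \<in> osym_ideal"
    unfolding osym_eq_def by (rule osym_ideal.add)
  moreover have "fa_add (fa_add a (fa_smult (-1) b)) (fa_add b (fa_smult (-1) c)) =
      fa_add a (fa_smult (-1) c)"
    by (auto simp: fa_add_def fa_smult_def)
  ultimately show ?thesis unfolding osym_eq_def by simp
qed

lemma osym_eq_add: "osym_eq a a' \<Longrightarrow> osym_eq b b' \<Longrightarrow> osym_eq (fa_add a b) (fa_add a' b')"
proof -
  assume "osym_eq a a'" "osym_eq b b'"
  then have "fa_add (fa_add a (fa_smult (-1) a')) (fa_add b (fa_smult (-1) b')) \<in> osym_ideal"
    unfolding osym_eq_def by (rule osym_ideal.add)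
  moreover have "fa_add (fa_add a (fa_smult (-1) a')) (fa_add b (fa_smult (-1) b')) =
      fa_add (fa_add a b) (fa_smult (-1) (fa_add a' b'))"
    by (auto simp: fa_add_def fa_smult_def)
  ultimately show ?thesis unfolding osym_eq_def by simp
qed

lemma osym_eq_smult: "osym_eq a a' \<Longrightarrow> osym_eq (fa_smult c a) (fa_smult c a')"
proof -
  assume "osym_eq a a'"
  then have "fa_smult c (fa_add a (fa_smult (-1) a')) \<in> osym_ideal"
    unfolding osym_eq_def by (rule osym_ideal.smult)
  moreover have "fa_smult c (fa_add a (fa_smult (-1) a')) =
      fa_add (fa_smult c a) (fa_smult (-1) (fa_smult c a'))"
    by (auto simp: fa_add_def fa_smult_def algebra_simps)
  ultimately show ?thesis unfolding osym_eq_def by simp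
qed

lemma osym_eq_mult_left: "x \<in> FA \<Longrightarrow> osym_eq a a' \<Longrightarrow> osym_eq (fa_mult x a) (fa_mult x a')"
proof -
  assume "x \<in> FA" "osym_eq a a'"
  then have "fa_mult x (fa_add a (fa_smult (-1) a')) \<in> osym_ideal"
    unfolding osym_eq_def by (intro osym_ideal.lmult)
  then show ?thesis unfolding osym_eq_def by (simp add: fa_mult_add_right fa_mult_smult_right)
qed

lemma osym_eq_mult_right: "x \<in> FA \<Longrightarrow> osym_eq a a' \<Longrightarrow> osym_eq (fa_mult a x) (fa_mult a' x)"
proof -
  assume "x \<in> FA" "osym_eq a a'"
  then have "fa_mult (fa_add a (fa_smult (-1) a')) x \<in> osym_ideal"
    unfolding osym_eq_def by (intro osym_ideal.rmult)
  then show ?thesis unfolding osym_eq_def by (simp add: fa_mult_add_left fa_mult_smult_left)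
qed

lemma osym_eq_mult:
  "a' \<in> FA \<Longrightarrow> b \<in> FA \<Longrightarrow> osym_eq a a' \<Longrightarrow> osym_eq b b' \<Longrightarrow>
    osym_eq (fa_mult a b) (fa_mult a' b')"
  by (meson osym_eq_mult_left osym_eq_mult_right osym_eq_trans)

lemma osym_eq_fsum:
  "finite A \<Longrightarrow> (\<And>i. i \<in> A \<Longrightarrow> osym_eq (f i) (g i)) \<Longrightarrow> osym_eq (fsum A f) (fsum A g)"
  by (induction A rule: finite_induct) (auto simp: fsum_insert intro: osym_eq_add)

lemma osym_eq_neg_of_add_eq_zero:
  "osym_eq (fa_add x y) fa_zero \<Longrightarrow> osym_eq x (fa_smult (-1) y)"
proof -
  assume "osym_eq (fa_add x y) fa_zero"
  then have "osym_eq (fa_add (fa_add x y) (fa_smult (-1) y)) (fa_add fa_zero (fa_smult (-1) y))"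
    by (intro osym_eq_add) auto
  moreover have "fa_add (fa_add x y) (fa_smult (-1) y) = x"
    by (auto simp: fa_add_def fa_smult_def)
  moreover have "fa_add fa_zero (fa_smult (-1) y) = fa_smult (-1) y"
    by (auto simp: fa_add_def fa_zero_def)
  ultimately show ?thesis by simp
qed

lemma osym_eq_first_term_of_null_sums:
  fixes n :: nat
  assumes n: "0 < n"
    and A: "osym_eq (fsum {..n} A) fa_zero" and B: "osym_eq (fsum {..n} B) fa_zero"
    and AB: "\<And>s. s \<in> {1..n} \<Longrightarrow> osym_eq (B s) (fa_smult c (A s))"
  shows "osym_eq (B 0) (fa_smult c (A 0))"
proof -
  have "osym_eq (fa_add (A 0) (fsum {1..n} A)) fa_zero"
    using A by (simp only: fsum_atMost_split_first[OF n])
  then have A0: "osym_eq (A 0) (fa_smult (-1) (fsum {1..n} A))"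
    by (rule osym_eq_neg_of_add_eq_zero)
  have "osym_eq (fa_add (B 0) (fsum {1..n} B)) fa_zero"
    using B by (simp only: fsum_atMost_split_first[OF n])
  then have "osym_eq (B 0) (fa_smult (-1) (fsum {1..n} B))"
    by (rule osym_eq_neg_of_add_eq_zero)
  also have "osym_eq \<dots> (fa_smult (-1) (fsum {1..n} (\<lambda>s. fa_smult c (A s))))"
    by (intro osym_eq_smult osym_eq_fsum AB) auto
  also have "\<dots> = fa_smult c (fa_smult (-1) (fsum {1..n} A))"
    by (simp only: fsum_smult fa_smult_smult mult.commute)
  also have "osym_eq \<dots> (fa_smult c (A 0))"
    using osym_eq_sym[OF A0] by (rule osym_eq_smult)
  finally show ?thesis .
qed

lemma pure_one [simp]: "pure 0 fa_one"
  by (simp add: pure_def fa_one_def)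

lemma pure_zero [simp]: "pure p fa_zero"
  by (simp add: pure_def fa_zero_def)

lemma pure_hgen: "pure (r mod 2) (hgen r)"
  unfolding pure_def hgen_def fa_one_def fa_gen_def by simp

lemma pure_add: "pure p a \<Longrightarrow> pure p b \<Longrightarrow> pure p (fa_add a b)"
  unfolding pure_def fa_add_def by (metis add.right_neutral)

lemma pure_smult: "pure p a \<Longrightarrow> pure p (fa_smult c a)"
  unfolding pure_def fa_smult_def by (metis mult_zero_right)

lemma pure_fsum: "finite A \<Longrightarrow> (\<And>i. i \<in> A \<Longrightarrow> pure p (f i)) \<Longrightarrow> pure p (fsum A f)"
  by (induction A rule: finite_induct) (simp_all add: fsum_insert pure_add)

lemma pure_mult: "pure p a \<Longrightarrow> pure q b \<Longrightarrow> pure ((p + q) mod 2) (fa_mult a b)"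
  unfolding pure_def
proof (intro allI impI)
  fix w
  assume a: "\<forall>w. a w \<noteq> 0 \<longrightarrow> sum_list w mod 2 = p" and b: "\<forall>w. b w \<noteq> 0 \<longrightarrow> sum_list w mod 2 = q"
    and "fa_mult a b w \<noteq> 0"
  then obtain i where "a (take i w) \<noteq> 0" "b (drop i w) \<noteq> 0"
    using fa_mult_nonzero_split by blast
  then have "sum_list (take i w) mod 2 = p" "sum_list (drop i w) mod 2 = q"
    using a b by auto
  moreover have "sum_list w = sum_list (take i w) + sum_list (drop i w)"
    by (metis append_take_drop_id sum_list_append)
  ultimately show "sum_list w mod 2 = (p + q) mod 2" by (metis mod_add_eq)
qed

lemma length_elist [simp]: "length (elist n) = Suc n"
  by (induction n) auto

lemma elist_nth: "s \<le> n \<Longrightarrow> elist n ! s = egen s"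
proof (induction n)
  case 0
  then show ?case by (simp add: egen_def)
next
  case (Suc n)
  then show ?case
    by (cases "s = Suc n") (simp_all add: egen_def nth_append)
qed

lemma egen_0 [simp]: "egen 0 = fa_one"
  by (simp add: egen_def)

lemma egen_Suc:
  "egen (Suc n) = fsum {..<Suc n}
     (\<lambda>s. fa_smult ((-1) ^ (Suc n - s + 1)) (fa_mult (egen s) (hgen (Suc n - s))))"
proof -
  have "egen (Suc n) = foldr fa_add (map (\<lambda>s. fa_smult ((-1) ^ (Suc n - s + 1))
      (fa_mult (elist n ! s) (hgen (Suc n - s)))) [0..<Suc n]) fa_zero"
    by (simp add: egen_def nth_append)
  also have "\<dots> = fsum {..<Suc n} (\<lambda>s. fa_smult ((-1) ^ (Suc n - s + 1))
      (fa_mult (elist n ! s) (hgen (Suc n - s))))"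
    by (simp only: foldr_fa_add_eq_fsum distinct_upt set_upt atLeast0LessThan)
  also have "\<dots> = fsum {..<Suc n} (\<lambda>s. fa_smult ((-1) ^ (Suc n - s + 1))
      (fa_mult (egen s) (hgen (Suc n - s))))"
    by (rule fsum_cong) (simp add: elist_nth)
  finally show ?thesis .
qed

lemma FA_egen [simp]: "(egen r :: 'k::field fa) \<in> FA"
proof (induction r rule: less_induct)
  case (less r)
  show ?case
  proof (cases r)
    case (Suc n)
    then have "(egen s :: 'k fa) \<in> FA" if "s < Suc n" for s
      using less that by simp
    then show ?thesis unfolding Suc egen_Suc by (intro FA_fsum FA_smult FA_mult FA_hgen) simp_all
  qed simp
qed

lemma pure_egen: "pure (r mod 2) (egen r :: 'k::field fa)"
proof (induction r rule: less_induct)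
  case (less r)
  show ?case
  proof (cases r)
    case (Suc n)
    have "pure (Suc n mod 2) (fa_smult c (fa_mult (egen s) (hgen (Suc n - s))) :: 'k fa)"
      if "s < Suc n" for s c
    proof -
      have "pure ((s mod 2 + (Suc n - s) mod 2) mod 2) (fa_mult (egen s) (hgen (Suc n - s)) :: 'k fa)"
        using less[of s] that Suc by (intro pure_mult pure_hgen) auto
      moreover have "(s mod 2 + (Suc n - s) mod 2) mod 2 = Suc n mod 2"
        using that by (metis le_add_diff_inverse less_imp_le mod_add_eq)
      ultimately show ?thesis by (metis pure_smult)
    qed
    then show ?thesis unfolding Suc egen_Suc by (intro pure_fsum) simp_all
  qed simp
qed

lemma minus_one_power_Suc_diff:
  "s < Suc n \<Longrightarrow> ((-1::'k::field) ^ Suc n) * (-1) ^ (Suc n - s + 1) = - ((-1) ^ s)"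
proof -
  assume "s < Suc n"
  then have "Suc n + (Suc n - s + 1) = 2 * (Suc n - s) + s + 1" by simp
  then have "((-1::'k) ^ Suc n) * (-1) ^ (Suc n - s + 1) = (-1) ^ (2 * (Suc n - s) + s + 1)"
    by (metis power_add)
  also have "\<dots> = - ((-1) ^ s)" by (simp add: power_add power_mult)
  finally show ?thesis .
qed

lemma e_h_convolution:
  "fsum {..r} (\<lambda>s. fa_smult ((-1) ^ s) (fa_mult (egen s) (hgen (r - s)))) =
    (if r = 0 then fa_one else fa_zero :: 'k::field fa)"
proof (cases r)
  case 0
  then show ?thesis by (auto simp: fsum_def hgen_def fa_smult_def intro!: ext)
next
  case (Suc n)
  show ?thesis
  proof
    fix w
    define g :: "nat \<Rightarrow> 'k" where "g = (\<lambda>s. (-1) ^ s * fa_mult (egen s) (hgen (Suc n - s)) w)"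
    have "fsum {..r} (\<lambda>s. fa_smult ((-1) ^ s) (fa_mult (egen s) (hgen (r - s)))) w =
        (\<Sum>s\<le>Suc n. g s)"
      by (simp add: Suc fsum_def fa_smult_def g_def)
    also have "\<dots> = (\<Sum>s<Suc n. g s) + g (Suc n)"
      by (simp add: lessThan_Suc_atMost[symmetric] del: lessThan_Suc)
    also have "g (Suc n) = (-1) ^ Suc n * egen (Suc n) w"
      by (simp add: g_def hgen_def)
    also have "\<dots> = (\<Sum>s<Suc n. (-1) ^ Suc n *
        ((-1) ^ (Suc n - s + 1) * fa_mult (egen s) (hgen (Suc n - s)) w))"
      by (simp only: egen_Suc fsum_def fa_smult_def sum_distrib_left)
    also have "\<dots> = (\<Sum>s<Suc n. - g s)"
    proof (rule sum.cong)
      fix s assume "s \<in> {..<Suc n}"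
      then have s: "s < Suc n" by simp
      show "(-1) ^ Suc n * ((-1) ^ (Suc n - s + 1) * fa_mult (egen s) (hgen (Suc n - s)) w) = - g s"
        unfolding g_def mult.assoc[symmetric] minus_one_power_Suc_diff[OF s] by simp
    qed simp
    finally show "fsum {..r} (\<lambda>s. fa_smult ((-1) ^ s) (fa_mult (egen s) (hgen (r - s)))) w =
        (if r = 0 then fa_one else fa_zero :: 'k fa) w"
      by (simp add: Suc fa_zero_def sum_negf)
  qed
qed

lemma fsum_triangle_reflect:
  "fsum {..(r::nat)} (\<lambda>i. fsum {..r - i} (\<lambda>s. F (r - i - s) s)) = fsum {..r} (\<lambda>k. fsum {..r - k} (F k))"
proof
  fix w
  have "(\<Sum>i\<le>r. \<Sum>s\<le>r - i. F (r - i - s) s w) =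
      (\<Sum>(i, s)\<in>Sigma {..r} (\<lambda>i. {..r - i}). F (r - i - s) s w)"
    by (rule sum.Sigma[of "{..r}" "\<lambda>i. {..r - i}"]) auto
  also have "\<dots> = (\<Sum>(k, s)\<in>Sigma {..r} (\<lambda>k. {..r - k}). F k s w)"
    by (rule sum.reindex_bij_witness[where i="\<lambda>(k, s). (r - k - s, s)" and j="\<lambda>(i, s). (r - i - s, s)"])
      auto
  also have "\<dots> = (\<Sum>k\<le>r. \<Sum>s\<le>r - k. F k s w)"
    by (rule sum.Sigma[of "{..r}" "\<lambda>k. {..r - k}", symmetric]) auto
  finally show "fsum {..r} (\<lambda>i. fsum {..r - i} (\<lambda>s. F (r - i - s) s)) w =
      fsum {..r} (\<lambda>k. fsum {..r - k} (F k)) w"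
    by (simp add: fsum_def)
qed

lemma convolution_assoc:
  "fsum {..(r::nat)} (\<lambda>k. fa_mult (fsum {..r - k} (\<lambda>s. fa_mult (f (r - k - s)) (g s))) (h k)) =
    fsum {..r} (\<lambda>i. fa_mult (f i) (fsum {..r - i} (\<lambda>s. fa_mult (g s) (h (r - i - s)))))"
proof -
  define F where "F = (\<lambda>k s. fa_mult (fa_mult (f (r - k - s)) (g s)) (h k))"
  have reflect: "r - (r - i - s) - s = i" if "i \<le> r" "s \<le> r - i" for i s
    using that by simp
  have "fsum {..r} (\<lambda>i. fa_mult (f i) (fsum {..r - i} (\<lambda>s. fa_mult (g s) (h (r - i - s))))) =
      fsum {..r} (\<lambda>i. fsum {..r - i} (\<lambda>s. F (r - i - s) s))"
    unfolding F_def fa_mult_fsum_right fa_mult_assoc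
    by (intro fsum_cong) (simp add: reflect)
  also have "\<dots> = fsum {..r} (\<lambda>k. fsum {..r - k} (F k))"
    by (rule fsum_triangle_reflect)
  finally show ?thesis
    unfolding F_def fa_mult_fsum_left by (simp add: diff_diff_add add.commute)
qed

lemma h_e_convolution:
  "fsum {..r} (\<lambda>s. fa_smult ((-1) ^ s) (fa_mult (hgen (r - s)) (egen s))) =
    (if r = 0 then fa_one else fa_zero :: 'k::field fa)"
proof -
  define R :: "nat \<Rightarrow> 'k fa"
    where "R n = fsum {..n} (\<lambda>s. fa_smult ((-1) ^ s) (fa_mult (hgen (n - s)) (egen s)))" for n
  have "R n = (if n = 0 then fa_one else fa_zero)" for n
  proof (induction n rule: less_induct)
    case (less n)
    show ?case
    proof (cases "n = 0")
      case True
      then show ?thesis by (auto simp: R_def fsum_def hgen_def fa_smult_def intro!: ext)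
    next
      case False
      have "fsum {..n} (\<lambda>k. fa_mult (R (n - k)) (hgen k)) =
          fsum {..n} (\<lambda>i. fa_mult (hgen i) (if n - i = 0 then fa_one else fa_zero))"
        using convolution_assoc[of n hgen "\<lambda>s. fa_smult ((-1) ^ s) (egen s)" hgen]
        by (simp add: R_def fa_mult_smult_left fa_mult_smult_right e_h_convolution del: diff_diff_left)
      also have "\<dots> = fsum {..n} (\<lambda>i. if i = n then hgen n else fa_zero)"
        by (rule fsum_cong) auto
      also have "\<dots> = hgen n"
        by (simp add: fsum_delta)
      finally have "hgen n = fa_add (R n) (fsum {1..n} (\<lambda>k. fa_mult (R (n - k)) (hgen k)))"
        using False by (simp add: fsum_atMost_split_first hgen_def)
      also have "fsum {1..n} (\<lambda>k. fa_mult (R (n - k)) (hgen k)) =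
          fsum {1..n} (\<lambda>k. if k = n then hgen n else fa_zero)"
        using less by (intro fsum_cong) auto
      also have "\<dots> = hgen n"
        using False by (simp add: fsum_delta)
      finally show ?thesis
        using False by (auto simp: fa_add_def fa_zero_def fun_eq_iff)
    qed
  qed
  then show ?thesis by (simp add: R_def)
qed

lemma osym_linear_FA: "osym_linear \<phi> \<Longrightarrow> a \<in> FA \<Longrightarrow> \<phi> a \<in> FA"
  by (simp add: osym_linear_def)

lemma osym_linear_resp:
  "osym_linear \<phi> \<Longrightarrow> a \<in> FA \<Longrightarrow> b \<in> FA \<Longrightarrow> osym_eq a b \<Longrightarrow> osym_eq (\<phi> a) (\<phi> b)"
  by (simp add: osym_linear_def)

lemma osym_linear_add:
  "osym_linear \<phi> \<Longrightarrow> a \<in> FA \<Longrightarrow> b \<in> FA \<Longrightarrow> osym_eq (\<phi> (fa_add a b)) (fa_add (\<phi> a) (\<phi> b))"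
  by (simp add: osym_linear_def)

lemma osym_linear_smult:
  "osym_linear \<phi> \<Longrightarrow> a \<in> FA \<Longrightarrow> osym_eq (\<phi> (fa_smult c a)) (fa_smult c (\<phi> a))"
  by (simp add: osym_linear_def)

lemma osym_linear_zero: "osym_linear \<phi> \<Longrightarrow> osym_eq (\<phi> fa_zero) fa_zero"
  using osym_linear_smult[of \<phi> fa_zero 0] FA_zero by (simp add: fa_smult_def fa_zero_def)

lemma osym_linear_resp_smult:
  "osym_linear \<phi> \<Longrightarrow> a \<in> FA \<Longrightarrow> b \<in> FA \<Longrightarrow> osym_eq a (fa_smult c b) \<Longrightarrow>
    osym_eq (\<phi> a) (fa_smult c (\<phi> b))"
  by (meson FA_smult osym_eq_trans osym_linear_resp osym_linear_smult)

lemma osym_linear_fsum: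
  assumes lin: "osym_linear \<phi>" and fin: "finite A" and xs: "\<And>i. i \<in> A \<Longrightarrow> x i \<in> FA"
  shows "osym_eq (\<phi> (fsum A (\<lambda>i. fa_smult (c i) (x i)))) (fsum A (\<lambda>i. fa_smult (c i) (\<phi> (x i))))"
  using fin xs
proof (induction A rule: finite_induct)
  case empty
  then show ?case by (simp add: osym_linear_zero lin)
next
  case (insert a A)
  have "osym_eq (\<phi> (fsum (insert a A) (\<lambda>i. fa_smult (c i) (x i))))
      (fa_add (\<phi> (fa_smult (c a) (x a))) (\<phi> (fsum A (\<lambda>i. fa_smult (c i) (x i)))))"
    unfolding fsum_insert[OF insert(1,2)] using insert
    by (intro osym_linear_add FA_smult FA_fsum lin) auto
  also have "osym_eq \<dots> (fa_add (fa_smult (c a) (\<phi> (x a))) (fsum A (\<lambda>i. fa_smult (c i) (\<phi> (x i)))))"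
    using insert by (intro osym_eq_add osym_linear_smult lin) auto
  finally show ?case unfolding fsum_insert[OF insert(1,2)] .
qed

lemma osym_linear_comp:
  assumes \<phi>: "osym_linear \<phi>" and \<chi>: "osym_linear \<chi>"
  shows "osym_linear (\<lambda>x. \<phi> (\<chi> x))"
proof -
  note FA_\<chi> = osym_linear_FA[OF \<chi>]
  have "osym_eq (\<phi> (\<chi> (fa_add a b))) (fa_add (\<phi> (\<chi> a)) (\<phi> (\<chi> b)))" if "a \<in> FA" "b \<in> FA" for a b
  proof -
    have "osym_eq (\<phi> (\<chi> (fa_add a b))) (\<phi> (fa_add (\<chi> a) (\<chi> b)))"
      using that by (intro osym_linear_resp[OF \<phi>] osym_linear_add[OF \<chi>]) (simp_all add: FA_\<chi>)
    also have "osym_eq \<dots> (fa_add (\<phi> (\<chi> a)) (\<phi> (\<chi> b)))"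
      using that by (intro osym_linear_add[OF \<phi>]) (simp_all add: FA_\<chi>)
    finally show ?thesis .
  qed
  moreover have "osym_eq (\<phi> (\<chi> (fa_smult k a))) (fa_smult k (\<phi> (\<chi> a)))" if "a \<in> FA" for a k
    using that by (intro osym_linear_resp_smult[OF \<phi>] osym_linear_smult[OF \<chi>]) (simp_all add: FA_\<chi>)
  moreover have "osym_eq (\<phi> (\<chi> a)) (\<phi> (\<chi> b))" if "a \<in> FA" "b \<in> FA" "osym_eq a b" for a b
    using that by (intro osym_linear_resp[OF \<phi>] osym_linear_resp[OF \<chi>]) (simp_all add: FA_\<chi>)
  ultimately show ?thesis
    using osym_linear_FA[OF \<phi>] FA_\<chi> unfolding osym_linear_def by simp
qed

lemma osym_hom_linear: "osym_hom \<phi> \<Longrightarrow> osym_linear \<phi>"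
  by (simp add: osym_hom_def)

lemma osym_hom_mult:
  "osym_hom \<phi> \<Longrightarrow> a \<in> FA \<Longrightarrow> b \<in> FA \<Longrightarrow> osym_eq (\<phi> (fa_mult a b)) (fa_mult (\<phi> a) (\<phi> b))"
  by (simp add: osym_hom_def)

lemma osym_hom_one: "osym_hom \<phi> \<Longrightarrow> osym_eq (\<phi> fa_one) fa_one"
  by (simp add: osym_hom_def)

lemma osym_super_antihom_linear: "osym_super_antihom \<phi> \<Longrightarrow> osym_linear \<phi>"
  by (simp add: osym_super_antihom_def)

lemma osym_super_antihom_mult:
  "osym_super_antihom \<phi> \<Longrightarrow> a \<in> FA \<Longrightarrow> b \<in> FA \<Longrightarrow> pure p a \<Longrightarrow> pure q b \<Longrightarrow>
    osym_eq (\<phi> (fa_mult a b)) (fa_smult ((-1) ^ (p * q)) (fa_mult (\<phi> b) (\<phi> a)))"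
  by (simp add: osym_super_antihom_def)

lemma osym_super_antihom_one: "osym_super_antihom \<phi> \<Longrightarrow> osym_eq (\<phi> fa_one) fa_one"
  by (simp add: osym_super_antihom_def)

lemma minus_one_power_mod2_mult: "((-1::'k::field) ^ ((a mod 2) * (b mod 2))) = (-1) ^ (a * b)"
  by (simp add: minus_one_power_iff even_mult_iff)

lemma minus_one_power_square [simp]: "((-1::'k::field) ^ n) * (-1) ^ n = 1"
  by (simp add: minus_one_power_iff)

lemma zero_choose_two [simp]: "(0::nat) choose 2 = 0"
  by (simp add: numeral_2_eq_2)

lemma choose2_add: "(s + t) choose 2 = (s choose 2) + (t choose 2) + s * t"
  by (induction t) (simp_all add: numeral_2_eq_2)

lemma minus_one_power_choose2_add:
  "((-1::'k::field) ^ s * (-1) ^ (t * s)) * (-1) ^ (t choose 2) =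
    (-1) ^ ((s + t) choose 2) * ((-1) ^ s * (-1) ^ (s choose 2))"
proof -
  have "((-1::'k) ^ s * (-1) ^ (t * s)) * (-1) ^ (t choose 2) = (-1) ^ (s + t * s + (t choose 2))"
    by (simp add: power_add)
  also have "\<dots> = (-1) ^ ((s + t * s + (t choose 2)) + 2 * (s choose 2))"
    by (simp add: power_add power_mult)
  also have "(s + t * s + (t choose 2)) + 2 * (s choose 2) =
      (s choose 2) + (t choose 2) + s * t + s + (s choose 2)"
    by (simp add: algebra_simps)
  also have "(-1::'k) ^ \<dots> = (-1) ^ ((s + t) choose 2) * ((-1) ^ s * (-1) ^ (s choose 2))"
    by (simp add: power_add choose2_add)
  finally show ?thesis .
qed

fun hword :: "nat list \<Rightarrow> 'k::field fa" where
  "hword [] = fa_one"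
| "hword (r # w) = fa_mult (hgen r) (hword w)"

fun eword :: "nat list \<Rightarrow> 'k::field fa" where
  "eword [] = fa_one"
| "eword (r # w) = fa_mult (egen r) (eword w)"

fun choose2_sum :: "nat list \<Rightarrow> nat" where
  "choose2_sum [] = 0"
| "choose2_sum (r # w) = (r choose 2) + choose2_sum w"

fun pair_products :: "nat list \<Rightarrow> nat" where
  "pair_products [] = 0"
| "pair_products (r # w) = r * sum_list w + pair_products w"

lemma hword_append: "(hword (u @ v) :: 'k::field fa) = fa_mult (hword u) (hword v)"
  by (induction u) (simp_all add: fa_mult_assoc)

lemma eword_append: "(eword (u @ v) :: 'k::field fa) = fa_mult (eword u) (eword v)"
  by (induction u) (simp_all add: fa_mult_assoc)

lemma FA_hword [simp]: "(hword w :: 'k::field fa) \<in> FA"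
  by (induction w) simp_all

lemma FA_eword [simp]: "(eword w :: 'k::field fa) \<in> FA"
  by (induction w) simp_all

lemma pure_hword: "pure (sum_list w mod 2) (hword w :: 'k::field fa)"
  by (induction w) (simp_all, metis mod_add_eq pure_hgen pure_mult)

lemma pure_eword: "pure (sum_list w mod 2) (eword w :: 'k::field fa)"
  by (induction w) (simp_all, metis mod_add_eq pure_egen pure_mult)

lemma fa_gen_mult_indicator:
  "fa_mult (fa_gen r) (\<lambda>u. if u = w then 1 else 0) = (\<lambda>u. if u = r # w then 1 else (0::'k::field))"
proof
  fix u :: "nat list"
  have "(if take i u = [r] then 1 else 0) * (if drop i u = w then 1 else 0) =
      (if i = 1 then (if u = r # w then 1 else 0) else (0::'k))" if "i \<le> length u" for i
  proof (cases "take i u = [r] \<and> drop i u = w")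
    case True
    then have "length (take i u) = 1" by simp
    then have "i = 1" using that by simp
    moreover have "u = r # w" using True by (metis append_Cons append_Nil append_take_drop_id)
    ultimately show ?thesis using True by simp
  qed auto
  then have "fa_mult (fa_gen r) (\<lambda>u. if u = w then 1 else 0) u =
      (\<Sum>i\<le>length u. if i = 1 then (if u = r # w then 1 else 0) else (0::'k))"
    unfolding fa_mult_def fa_gen_def by (intro sum.cong) simp_all
  also have "\<dots> = (if u = r # w then 1 else 0)"
    by (simp add: sum.delta)
  finally show "fa_mult (fa_gen r) (\<lambda>u. if u = w then 1 else 0) u = (if u = r # w then 1 else (0::'k))" .
qed

lemma hword_eq_indicator: "0 \<notin> set w \<Longrightarrow> (hword w :: 'k::field fa) = (\<lambda>u. if u = w then 1 else 0)"
  by (induction w) (simp_all add: fa_one_def hgen_def fa_gen_mult_indicator)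

lemma FA_eq_fsum_hword:
  assumes "a \<in> FA"
  shows "a = fsum {w. a w \<noteq> 0} (\<lambda>w. fa_smult (a w) (hword w))"
proof
  fix u
  have "fsum {w. a w \<noteq> 0} (\<lambda>w. fa_smult (a w) (hword w)) u = (\<Sum>w\<in>{w. a w \<noteq> 0}. if u = w then a w else 0)"
    unfolding fsum_def fa_smult_def
  proof (rule sum.cong)
    fix w assume "w \<in> {w. a w \<noteq> 0}"
    then have "0 \<notin> set w" using assms by (simp add: FA_def)
    then show "a w * hword w u = (if u = w then a w else 0)" by (simp add: hword_eq_indicator)
  qed simp
  also have "\<dots> = a u" using assms by (simp add: FA_def sum.delta')
  finally show "a u = fsum {w. a w \<noteq> 0} (\<lambda>w. fa_smult (a w) (hword w)) u" ..
qed

lemma osym_linear_eq_if_eq_on_hwords: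
  assumes \<phi>: "osym_linear \<phi>" and \<chi>: "osym_linear \<chi>"
    and eq: "\<And>w. osym_eq (\<phi> (hword w)) (\<chi> (hword w))" and a: "a \<in> FA"
  shows "osym_eq (\<phi> a) (\<chi> a)"
proof -
  define S where "S = {w. a w \<noteq> 0}"
  have S: "finite S" using a by (simp add: FA_def S_def)
  have expand: "a = fsum S (\<lambda>w. fa_smult (a w) (hword w))"
    unfolding S_def using a by (rule FA_eq_fsum_hword)
  have "osym_eq (\<phi> a) (fsum S (\<lambda>w. fa_smult (a w) (\<phi> (hword w))))"
    by (subst expand) (rule osym_linear_fsum[OF \<phi> S]; simp)
  also have "osym_eq \<dots> (fsum S (\<lambda>w. fa_smult (a w) (\<chi> (hword w))))"
    using S by (intro osym_eq_fsum osym_eq_smult eq)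
  also have "osym_eq \<dots> (\<chi> a)"
    by (subst (2) expand, rule osym_eq_sym, rule osym_linear_fsum[OF \<chi> S]) simp
  finally show ?thesis .
qed

locale gamma_star =
  fixes \<gamma> st :: "'k::field fa \<Rightarrow> 'k fa"
  assumes gamma_hom: "osym_hom \<gamma>"
    and gamma_egen: "\<And>r. 1 \<le> r \<Longrightarrow> osym_eq (\<gamma> (egen r)) (fa_smult ((-1) ^ (r choose 2)) (egen r))"
    and star_antihom: "osym_super_antihom st"
    and star_egen: "\<And>r. 1 \<le> r \<Longrightarrow> osym_eq (st (egen r)) (egen r)"
begin

lemma gamma_linear: "osym_linear \<gamma>"
  using gamma_hom by (rule osym_hom_linear)

lemma star_linear: "osym_linear st"
  using star_antihom by (rule osym_super_antihom_linear)

lemma gamma_FA [simp]: "a \<in> FA \<Longrightarrow> \<gamma> a \<in> FA"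
  using gamma_linear by (rule osym_linear_FA)

lemma star_FA [simp]: "a \<in> FA \<Longrightarrow> st a \<in> FA"
  using star_linear by (rule osym_linear_FA)

lemma gamma_egen_all: "osym_eq (\<gamma> (egen r)) (fa_smult ((-1) ^ (r choose 2)) (egen r))"
  using gamma_egen[of r] osym_hom_one[OF gamma_hom] by (cases "r = 0") simp_all

lemma star_egen_all: "osym_eq (st (egen r)) (egen r)"
  using star_egen[of r] osym_super_antihom_one[OF star_antihom] by (cases "r = 0") simp_all

lemma gamma_e_h_relation:
  assumes "1 \<le> r"
  shows "osym_eq (fsum {..r} (\<lambda>s. fa_smult ((-1) ^ s * (-1) ^ (s choose 2))
      (fa_mult (egen s) (\<gamma> (hgen (r - s)))))) fa_zero"
proof (rule osym_eq_sym)
  have "osym_eq fa_zero (\<gamma> fa_zero)"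
    by (rule osym_eq_sym, rule osym_linear_zero[OF gamma_linear])
  also have "\<gamma> fa_zero = \<gamma> (fsum {..r} (\<lambda>s. fa_smult ((-1) ^ s) (fa_mult (egen s) (hgen (r - s)))))"
    using assms by (simp add: e_h_convolution)
  also have "osym_eq \<dots> (fsum {..r} (\<lambda>s. fa_smult ((-1) ^ s) (\<gamma> (fa_mult (egen s) (hgen (r - s))))))"
    by (rule osym_linear_fsum[OF gamma_linear]) simp_all
  also have "osym_eq \<dots> (fsum {..r} (\<lambda>s. fa_smult ((-1) ^ s) (fa_mult (\<gamma> (egen s)) (\<gamma> (hgen (r - s))))))"
    by (intro osym_eq_fsum osym_eq_smult osym_hom_mult[OF gamma_hom]) simp_all
  also have "osym_eq \<dots> (fsum {..r} (\<lambda>s. fa_smult ((-1) ^ s)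
      (fa_mult (fa_smult ((-1) ^ (s choose 2)) (egen s)) (\<gamma> (hgen (r - s))))))"
    by (intro osym_eq_fsum osym_eq_smult osym_eq_mult_right gamma_egen_all) simp_all
  also have "\<dots> = fsum {..r} (\<lambda>s. fa_smult ((-1) ^ s * (-1) ^ (s choose 2))
      (fa_mult (egen s) (\<gamma> (hgen (r - s)))))"
    by (simp add: fa_mult_smult_left)
  finally show "osym_eq fa_zero \<dots>" .
qed

lemma star_h_e_relation:
  assumes "1 \<le> r"
  shows "osym_eq (fsum {..r} (\<lambda>s. fa_smult ((-1) ^ s * (-1) ^ ((r - s) * s))
      (fa_mult (egen s) (st (hgen (r - s)))))) fa_zero"
proof (rule osym_eq_sym)
  have "osym_eq fa_zero (st fa_zero)"
    by (rule osym_eq_sym, rule osym_linear_zero[OF star_linear])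
  also have "st fa_zero = st (fsum {..r} (\<lambda>s. fa_smult ((-1) ^ s) (fa_mult (hgen (r - s)) (egen s))))"
    using assms by (simp add: h_e_convolution)
  also have "osym_eq \<dots> (fsum {..r} (\<lambda>s. fa_smult ((-1) ^ s) (st (fa_mult (hgen (r - s)) (egen s)))))"
    by (rule osym_linear_fsum[OF star_linear]) simp_all
  also have "osym_eq \<dots> (fsum {..r} (\<lambda>s. fa_smult ((-1) ^ s)
      (fa_smult ((-1) ^ (((r - s) mod 2) * (s mod 2))) (fa_mult (st (egen s)) (st (hgen (r - s)))))))"
    by (intro osym_eq_fsum osym_eq_smult osym_super_antihom_mult[OF star_antihom] pure_hgen pure_egen)
      simp_all
  also have "osym_eq \<dots> (fsum {..r} (\<lambda>s. fa_smult ((-1) ^ s)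
      (fa_smult ((-1) ^ (((r - s) mod 2) * (s mod 2))) (fa_mult (egen s) (st (hgen (r - s)))))))"
    by (intro osym_eq_fsum osym_eq_smult osym_eq_mult_right star_egen_all) simp_all
  also have "\<dots> = fsum {..r} (\<lambda>s. fa_smult ((-1) ^ s * (-1) ^ ((r - s) * s))
      (fa_mult (egen s) (st (hgen (r - s)))))"
    by (simp add: minus_one_power_mod2_mult)
  finally show "osym_eq fa_zero \<dots>" .
qed

lemma star_hgen: "osym_eq (st (hgen r)) (fa_smult ((-1) ^ (r choose 2)) (\<gamma> (hgen r)))"
proof (induction r rule: less_induct)
  case (less r)
  show ?case
  proof (cases "r = 0")
    case True
    have "osym_eq (st fa_one) fa_one" by (rule osym_super_antihom_one[OF star_antihom])
    also have "osym_eq fa_one (\<gamma> fa_one)" by (rule osym_eq_sym, rule osym_hom_one[OF gamma_hom])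
    finally show ?thesis using True by (simp add: hgen_def)
  next
    case False
    define A where "A = (\<lambda>s. fa_smult ((-1) ^ s * (-1) ^ (s choose 2))
      (fa_mult (egen s) (\<gamma> (hgen (r - s)))))"
    define B where "B = (\<lambda>s. fa_smult ((-1) ^ s * (-1) ^ ((r - s) * s))
      (fa_mult (egen s) (st (hgen (r - s)))))"
    have "osym_eq (B s) (fa_smult ((-1) ^ (r choose 2)) (A s))" if s: "s \<in> {1..r}" for s
    proof -
      have "osym_eq (B s) (fa_smult ((-1) ^ s * (-1) ^ ((r - s) * s))
          (fa_mult (egen s) (fa_smult ((-1) ^ ((r - s) choose 2)) (\<gamma> (hgen (r - s))))))"
        unfolding B_def using s by (intro osym_eq_smult osym_eq_mult_left FA_egen less) auto
      also have "\<dots> = fa_smult (((-1) ^ s * (-1) ^ ((r - s) * s)) * (-1) ^ ((r - s) choose 2))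
          (fa_mult (egen s) (\<gamma> (hgen (r - s))))"
        by (simp add: fa_mult_smult_right)
      also have "((-1) ^ s * (-1) ^ ((r - s) * s)) * (-1) ^ ((r - s) choose 2) =
          ((-1::'k) ^ (r choose 2)) * ((-1) ^ s * (-1) ^ (s choose 2))"
        using minus_one_power_choose2_add[of s "r - s"] s by simp
      finally show ?thesis by (simp add: A_def)
    qed
    then have "osym_eq (B 0) (fa_smult ((-1) ^ (r choose 2)) (A 0))"
      using False gamma_e_h_relation[of r] star_h_e_relation[of r]
      by (intro osym_eq_first_term_of_null_sums[of r A B]) (simp_all add: A_def B_def)
    then show ?thesis by (simp add: A_def B_def)
  qed
qed

lemma gamma_hgen_eq_star: "osym_eq (\<gamma> (hgen r)) (fa_smult ((-1) ^ (r choose 2)) (st (hgen r)))"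
proof -
  have "osym_eq (fa_smult ((-1) ^ (r choose 2)) (st (hgen r)))
      (fa_smult ((-1) ^ (r choose 2)) (fa_smult ((-1) ^ (r choose 2)) (\<gamma> (hgen r))))"
    by (intro osym_eq_smult star_hgen)
  then show ?thesis by (simp add: osym_eq_sym)
qed

lemma gamma_egen_eq_star: "osym_eq (\<gamma> (egen r)) (fa_smult ((-1) ^ (r choose 2)) (st (egen r)))"
  using gamma_egen_all osym_eq_smult[OF osym_eq_sym[OF star_egen_all]] by (rule osym_eq_trans)

lemma gamma_eword: "osym_eq (\<gamma> (eword w)) (fa_smult ((-1) ^ choose2_sum w) (eword w))"
proof (induction w)
  case Nil
  then show ?case using osym_hom_one[OF gamma_hom] by simp
next
  case (Cons r w)
  have "osym_eq (\<gamma> (eword (r # w))) (fa_mult (\<gamma> (egen r)) (\<gamma> (eword w)))"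
    by (simp add: osym_hom_mult[OF gamma_hom])
  also have "osym_eq \<dots> (fa_mult (fa_smult ((-1) ^ (r choose 2)) (egen r))
      (fa_smult ((-1) ^ choose2_sum w) (eword w)))"
    by (rule osym_eq_mult[OF _ _ gamma_egen_all Cons]) simp_all
  also have "\<dots> = fa_smult ((-1) ^ choose2_sum (r # w)) (eword (r # w))"
    by (simp add: fa_mult_smult_left fa_mult_smult_right power_add mult.commute)
  finally show ?case .
qed

lemma star_eword: "osym_eq (st (eword w)) (fa_smult ((-1) ^ pair_products w) (eword (rev w)))"
proof (induction w)
  case Nil
  then show ?case using osym_super_antihom_one[OF star_antihom] by simp
next
  case (Cons r w)
  have "osym_eq (st (eword (r # w)))
      (fa_smult ((-1) ^ ((r mod 2) * (sum_list w mod 2))) (fa_mult (st (eword w)) (st (egen r))))"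
    by (simp add: osym_super_antihom_mult[OF star_antihom _ _ pure_egen pure_eword])
  also have "osym_eq \<dots> (fa_smult ((-1) ^ ((r mod 2) * (sum_list w mod 2)))
      (fa_mult (fa_smult ((-1) ^ pair_products w) (eword (rev w))) (egen r)))"
    by (rule osym_eq_smult, rule osym_eq_mult[OF _ _ Cons star_egen_all]) simp_all
  also have "\<dots> = fa_smult ((-1) ^ pair_products (r # w)) (eword (rev (r # w)))"
    by (simp add: fa_mult_smult_left minus_one_power_mod2_mult power_add eword_append mult.commute)
  finally show ?case .
qed

lemma star_hgen_mult_star_hword:
  "osym_eq (fa_mult (st (hgen r)) (st (hword v))) (fa_smult ((-1) ^ (sum_list v * r)) (st (hword (v @ [r]))))"
proof -
  define \<sigma> :: 'k where "\<sigma> = (-1) ^ (sum_list v * r)"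
  have snoc: "hword (v @ [r]) = (fa_mult (hword v) (hgen r) :: 'k fa)"
    by (simp add: hword_append)
  have "osym_eq (st (fa_mult (hword v) (hgen r))) (fa_smult \<sigma> (fa_mult (st (hgen r)) (st (hword v))))"
    using osym_super_antihom_mult[OF star_antihom _ _ pure_hword pure_hgen, of v r]
    by (simp add: \<sigma>_def minus_one_power_mod2_mult)
  then have "osym_eq (fa_smult \<sigma> (st (hword (v @ [r])))) (fa_smult \<sigma> (fa_smult \<sigma> (fa_mult (st (hgen r)) (st (hword v)))))"
    unfolding snoc by (rule osym_eq_smult)
  then show ?thesis
    by (simp add: \<sigma>_def osym_eq_sym)
qed

lemma gamma_hword:
  "osym_eq (\<gamma> (hword w)) (fa_smult ((-1) ^ (choose2_sum w + pair_products w)) (st (hword (rev w))))"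
proof (induction w)
  case Nil
  then show ?case
    using osym_eq_trans[OF osym_hom_one[OF gamma_hom] osym_eq_sym[OF osym_super_antihom_one[OF star_antihom]]]
    by simp
next
  case (Cons r w)
  have "osym_eq (\<gamma> (hword (r # w))) (fa_mult (\<gamma> (hgen r)) (\<gamma> (hword w)))"
    by (simp add: osym_hom_mult[OF gamma_hom])
  also have "osym_eq \<dots> (fa_mult (fa_smult ((-1) ^ (r choose 2)) (st (hgen r)))
      (fa_smult ((-1) ^ (choose2_sum w + pair_products w)) (st (hword (rev w)))))"
    by (rule osym_eq_mult[OF _ _ gamma_hgen_eq_star Cons]) simp_all
  also have "\<dots> = fa_smult ((-1) ^ (r choose 2) * (-1) ^ (choose2_sum w + pair_products w))
      (fa_mult (st (hgen r)) (st (hword (rev w))))"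
    by (simp add: fa_mult_smult_left fa_mult_smult_right mult.commute)
  also have "osym_eq \<dots> (fa_smult ((-1) ^ (r choose 2) * (-1) ^ (choose2_sum w + pair_products w))
      (fa_smult ((-1) ^ (sum_list (rev w) * r)) (st (hword (rev w @ [r])))))"
    by (rule osym_eq_smult[OF star_hgen_mult_star_hword])
  also have "\<dots> = fa_smult ((-1) ^ (choose2_sum (r # w) + pair_products (r # w))) (st (hword (rev (r # w))))"
    by (simp add: power_add sum_list_rev mult.commute mult.left_commute)
  finally show ?case .
qed

end

locale psi_gamma_star = gamma_star \<gamma> st for \<gamma> st :: "'k::field fa \<Rightarrow> 'k fa" +
  fixes \<psi> :: "'k fa \<Rightarrow> 'k fa"
  assumes psi_hom: "osym_hom \<psi>"
    and psi_hgen: "\<And>r. 1 \<le> r \<Longrightarrow> osym_eq (\<psi> (hgen r)) (fa_smult ((-1) ^ r) (egen r))"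
    and star_involutive: "osym_involutive st"
begin

lemma psi_linear: "osym_linear \<psi>"
  using psi_hom by (rule osym_hom_linear)

lemma psi_FA [simp]: "a \<in> FA \<Longrightarrow> \<psi> a \<in> FA"
  using psi_linear by (rule osym_linear_FA)

lemma psi_hword: "osym_eq (\<psi> (hword w)) (fa_smult ((-1) ^ sum_list w) (eword w))"
proof (induction w)
  case Nil
  then show ?case using osym_hom_one[OF psi_hom] by simp
next
  case (Cons r w)
  have psi_r: "osym_eq (\<psi> (hgen r)) (fa_smult ((-1) ^ r) (egen r))"
    using psi_hgen[of r] osym_hom_one[OF psi_hom] by (cases "r = 0") (simp_all add: hgen_def)
  have "osym_eq (\<psi> (hword (r # w))) (fa_mult (\<psi> (hgen r)) (\<psi> (hword w)))"
    by (simp add: osym_hom_mult[OF psi_hom])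
  also have "osym_eq \<dots> (fa_mult (fa_smult ((-1) ^ r) (egen r)) (fa_smult ((-1) ^ sum_list w) (eword w)))"
    by (rule osym_eq_mult[OF _ _ psi_r Cons]) simp_all
  also have "\<dots> = fa_smult ((-1) ^ sum_list (r # w)) (eword (r # w))"
    by (simp add: fa_mult_smult_left fa_mult_smult_right power_add mult.commute)
  finally show ?case .
qed

lemma star_gamma_psi_hword:
  "osym_eq (st (\<gamma> (\<psi> (hword w))))
    (fa_smult ((-1) ^ (sum_list w + choose2_sum w + pair_products w)) (eword (rev w)))"
proof -
  have "osym_eq (\<gamma> (\<psi> (hword w))) (fa_smult ((-1) ^ sum_list w) (\<gamma> (eword w)))"
    by (rule osym_linear_resp_smult[OF gamma_linear _ _ psi_hword]) simp_all
  also have "osym_eq \<dots> (fa_smult ((-1) ^ sum_list w) (fa_smult ((-1) ^ choose2_sum w) (eword w)))"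
    by (rule osym_eq_smult[OF gamma_eword])
  finally have "osym_eq (st (\<gamma> (\<psi> (hword w))))
      (fa_smult ((-1) ^ sum_list w * (-1) ^ choose2_sum w) (st (eword w)))"
    by (intro osym_linear_resp_smult[OF star_linear]) simp_all
  also have "osym_eq \<dots> (fa_smult ((-1) ^ sum_list w * (-1) ^ choose2_sum w)
      (fa_smult ((-1) ^ pair_products w) (eword (rev w))))"
    by (rule osym_eq_smult[OF star_eword])
  finally show ?thesis by (simp add: power_add)
qed

lemma psi_star_gamma_hword:
  "osym_eq (\<psi> (st (\<gamma> (hword w))))
    (fa_smult ((-1) ^ (sum_list w + choose2_sum w + pair_products w)) (eword (rev w)))"
proof -
  have "osym_eq (st (\<gamma> (hword w)))
      (fa_smult ((-1) ^ (choose2_sum w + pair_products w)) (st (st (hword (rev w)))))"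
    by (rule osym_linear_resp_smult[OF star_linear _ _ gamma_hword]) simp_all
  also have "osym_eq \<dots> (fa_smult ((-1) ^ (choose2_sum w + pair_products w)) (hword (rev w)))"
    using star_involutive by (intro osym_eq_smult) (simp add: osym_involutive_def)
  finally have "osym_eq (\<psi> (st (\<gamma> (hword w))))
      (fa_smult ((-1) ^ (choose2_sum w + pair_products w)) (\<psi> (hword (rev w))))"
    by (intro osym_linear_resp_smult[OF psi_linear]) simp_all
  also have "osym_eq \<dots> (fa_smult ((-1) ^ (choose2_sum w + pair_products w))
      (fa_smult ((-1) ^ sum_list (rev w)) (eword (rev w))))"
    by (rule osym_eq_smult[OF psi_hword])
  finally show ?thesis by (simp add: power_add sum_list_rev mult.commute mult.left_commute)
qed

lemma star_gamma_psi_commute: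
  assumes "a \<in> FA"
  shows "osym_eq (st (\<gamma> (\<psi> a))) (\<psi> (st (\<gamma> a)))"
proof (rule osym_linear_eq_if_eq_on_hwords[OF _ _ _ assms])
  show "osym_linear (\<lambda>a. st (\<gamma> (\<psi> a)))"
    using osym_linear_comp[OF star_linear osym_linear_comp[OF gamma_linear psi_linear]] .
  show "osym_linear (\<lambda>a. \<psi> (st (\<gamma> a)))"
    using osym_linear_comp[OF psi_linear osym_linear_comp[OF star_linear gamma_linear]] .
  show "osym_eq (st (\<gamma> (\<psi> (hword w)))) (\<psi> (st (\<gamma> (hword w))))" for w
    using star_gamma_psi_hword osym_eq_sym[OF psi_star_gamma_hword] by (rule osym_eq_trans)
qed

end

theorem mainTheorem7:
  fixes \<psi> \<gamma> st :: "'k::field fa \<Rightarrow> 'k fa"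
  assumes char: "(2::'k) \<noteq> 0"
    and psi_hom: "osym_hom \<psi>" and psi_bij: "osym_bij \<psi>"
    and psi_h: "\<forall>r\<ge>1. osym_eq (\<psi> (hgen r)) (fa_smult ((-1) ^ r) (egen r))"
    and gamma_hom: "osym_hom \<gamma>" and gamma_inv: "osym_involutive \<gamma>"
    and gamma_e: "\<forall>r\<ge>1. osym_eq (\<gamma> (egen r)) (fa_smult ((-1) ^ (r choose 2)) (egen r))"
    and st_anti: "osym_super_antihom st" and st_inv: "osym_involutive st"
    and st_e: "\<forall>r\<ge>1. osym_eq (st (egen r)) (egen r)"
  shows "(\<forall>r. osym_eq (\<gamma> (hgen r)) (fa_smult ((-1) ^ (r choose 2)) (st (hgen r))) \<and>
              osym_eq (\<gamma> (egen r)) (fa_smult ((-1) ^ (r choose 2)) (st (egen r)))) \<and>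
         (\<forall>a\<in>FA. osym_eq (st (\<gamma> (\<psi> a))) (\<psi> (st (\<gamma> a))))"
proof -
  interpret psi_gamma_star \<gamma> st \<psi>
    using gamma_hom gamma_e st_anti st_e psi_hom psi_h st_inv by unfold_locales auto
  show ?thesis
    using gamma_hgen_eq_star gamma_egen_eq_star star_gamma_psi_commute by blast
qed

end
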